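(* Let $\lambda>0$, $f:\mathbb{R}^n\to\mathbb{R}$ twice continuously differentiable, $\varphi=f+\lambda\|\cdot\|_1$, and $x^0$ with $\mathcal{L}_\varphi(x^0)$ bounded and $f$ twice uniformly Lipschitz continuously differentiable on an open neighborhood of it; assume $\varphi$ has a minimizer. Let $\{x^k\}$ be generated by FPGN2CM (described in the context). Then there exists $K\in\mathbb{N}$ such that the Newton-CG step is invoked for all $k\ge K$.
   Context: $\mathcal{G}_t(x):=t(x-\mathrm{prox}_{\frac\lambda t\|\cdot\|_1}(x-\frac1t\nabla f(x)))$; $\mathrm{sgn}(0)=1$. For $x$: $I^\varepsilon_0=\{i:|x_i|\le\varepsilon_g^{1/2}\}$, $I^\varepsilon_{\neq0}=\{i:|x_i|>\varepsilon_g^{1/2}\}$; $g^\varepsilon(x)_i=(\nabla f(x))_i+\lambda$ if $x_i>\varepsilon_g^{1/2}$, $(\nabla f(x))_i-\lambda$ if $x_i<-\varepsilon_g^{1/2}$, $(\nabla f(x))_i-\min\{\max\{-\lambda-\varepsilon_g^{3/4},(\nabla f(x))_i\},\lambda+\varepsilon_g^{3/4}\}$ otherwise. Capped CG (inputs symmetric $H$, $g$, $\epsilon$, $\zeta\in(0,1)$, $\delta$, $\bar\tau$, $M\ge0$): $\bar H=H+\bar\tau\|g\|^\delta I$, $\kappa=\frac{M+\bar\tau\|g\|^\delta}\epsilon$, $\hat\zeta=\frac\zeta{3\kappa}$, $\tau=\frac{\sqrt\kappa}{\sqrt\kappa+1}$, $T=\frac{4\kappa^4}{(1-\sqrt\tau)^2}$,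 $y_0=0,r_0=g,p_0=-g$; if $p_0^\top\bar Hp_0<\epsilon\|p_0\|^2$ return $(p_0,\mathrm{NC})$; if $\|Hp_0\|>M\|p_0\|$ update $M$ and $\kappa,\hat\zeta,\tau,T$. Loop: standard CG iteration on $\bar Hy=-g$ ($\alpha_j=\|r_j\|^2/p_j^\top\bar Hp_j$, $y_{j+1}=y_j+\alpha_jp_j$, $r_{j+1}=r_j+\alpha_j\bar Hp_j$, $\beta_{j+1}=\|r_{j+1}\|^2/\|r_j\|^2$, $p_{j+1}=-r_{j+1}+\beta_{j+1}p_j$, $j\leftarrow j+1$), updating $M$ whenever $\|Hv\|>M\|v\|$ for $v\in\{p_j,y_j,r_j\}$; then if $y_j^\top\bar Hy_j<\epsilon\|y_j\|^2$ return $(y_j,\mathrm{NC})$; elif $\|r_j\|\le\hat\zeta\|r_0\|$ return $(y_j,\mathrm{SOL})$; elif $p_j^\top\bar Hp_j<\epsilon\|p_j\|^2$ return $(p_j,\mathrm{NC})$; elif $\|r_j\|>\sqrt T\tau^{j/2}\|r_0\|$, compute $y_{j+1}$, find $i<j$ with $(y_{j+1}-y_i)^\top\bar H(y_{j+1}-y_i)<\epsilon\|y_{j+1}-y_i\|^2$ and return $(y_{j+1}-y_i,\mathrm{NC})$. FPGN2CM (parameters $0<\varepsilon_g<1$, $\varepsilon_h=\varepsilon_g^{1/2}$, $\beta>1$, $\delta\in[0,1]$, $\hat\tau\ge1$, $\zeta\in(0,1)$, $\bar\eta\in(0,1)$, $\eta\in(0,\frac{1-\zeta}2)$, $\theta\in(0,1)$),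 at iteration $k$ with $I^{k\varepsilon}_0=I^\varepsilon_0(x^k)$, $I^{k\varepsilon}_{\neq0}=I^\varepsilon_{\neq0}(x^k)$: (a) proximal gradient step: if $I^{k\varepsilon}_0\neq\emptyset$ and $g^\varepsilon(x^k)_i\neq0$ for some $i\in I^{k\varepsilon}_0$, set $x^{k+1}=\mathrm{prox}_{\frac\lambda{\beta^{j_k}}\|\cdot\|_1}(x^k-\beta^{-j_k}\nabla f(x^k))$ with $j_k$ the smallest nonnegative $j$ such that $\varphi(\mathrm{prox}_{\frac\lambda{\beta^j}\|\cdot\|_1}(x^k-\beta^{-j}\nabla f(x^k)))<\varphi(x^k)-\frac{\bar\eta}{\beta^j}\|\mathcal{G}_{\beta^j}(x^k)\|^2$; (b) Newton-CG step: else if $I^{k\varepsilon}_{\neq0}\neq\emptyset$ and $\|g^\varepsilon(x^k)_{I^{k\varepsilon}_{\neq0}}\|\neq0$: with $H=(\nabla^2f(x^k))_{I^{k\varepsilon}_{\neq0}}$, $g=g^\varepsilon(x^k)_{I^{k\varepsilon}_{\neq0}}$, $\tau_k\in[\frac{2\varepsilon_h}{\|g\|^\delta},\frac{2\hat\tau\varepsilon_h}{\|g\|^\delta}]$, call Capped CG$(H,g,\varepsilon_h,\zeta,\delta,\tau_k,M)$ to get $(d,d_{\rm type})$; $d^k=0$ on $I^{k\varepsilon}_0$, and on $I^{k\varepsilon}_{\neq0}$ equals $-\mathrm{sgn}(d^\top g)\frac{|d^\top Hd|}{\|d\|^2}\frac d{\|d\|}$ if NC, $d$ if SOL; $x^{k+1}=x^k+\theta^{j_k}d^k$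 with $j_k$ the smallest nonnegative $j$ such that $\varphi(x^k+\theta^jd^k)<\varphi(x^k)-\eta\theta^{2j}\varepsilon_h\|d^k\|^2$. (No second-order phase is performed.) *)

theory Defs
  imports "HOL-Analysis.Analysis"
begin

definition l1norm :: "real^'n \<Rightarrow> real" where
  "l1norm x = (\<Sum>i\<in>UNIV. \<bar>x$i\<bar>)"

definition phi :: "(real^'n \<Rightarrow> real) \<Rightarrow> real \<Rightarrow> real^'n \<Rightarrow> real" where
  "phi f lam x = f x + lam * l1norm x"

definition prox_l1 :: "real \<Rightarrow> real^'n \<Rightarrow> real^'n" where
  "prox_l1 c z = (THE u. \<forall>v. c * l1norm u + (norm (u - z))\<^sup>2 / 2
                              \<le> c * l1norm v + (norm (v - z))\<^sup>2 / 2)"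

definition sgn1 :: "real \<Rightarrow> real" where
  "sgn1 a = (if a \<ge> 0 then 1 else -1)"

definition Gmap :: "real \<Rightarrow> (real^'n \<Rightarrow> real^'n) \<Rightarrow> real \<Rightarrow> real^'n \<Rightarrow> real^'n" where
  "Gmap lam gf t x = t *\<^sub>R (x - prox_l1 (lam / t) (x - (1 / t) *\<^sub>R gf x))"

definition Izero :: "real \<Rightarrow> real^'n \<Rightarrow> 'n set" where
  "Izero eg x = {i. \<bar>x$i\<bar> \<le> sqrt eg}"

definition Inz :: "real \<Rightarrow> real^'n \<Rightarrow> 'n set" where
  "Inz eg x = {i. \<bar>x$i\<bar> > sqrt eg}"

definition geps :: "real \<Rightarrow> real \<Rightarrow> (real^'n \<Rightarrow> real^'n) \<Rightarrow> real^'n \<Rightarrow> real^'n" where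
  "geps lam eg gf x = (\<chi> i.
     if x$i > sqrt eg then gf x $ i + lam
     else if x$i < - sqrt eg then gf x $ i - lam
     else gf x $ i - min (max (- lam - eg powr (3/4)) (gf x $ i)) (lam + eg powr (3/4)))"

text \<open>Subvectors indexed by I are represented as vectors of real^'n vanishing off I.\<close>
definition restr :: "'n set \<Rightarrow> real^'n \<Rightarrow> real^'n" where
  "restr I v = (\<chi> i. if i \<in> I then v$i else 0)"

datatype cg_type = NC | SOL

text \<open>CG iterates (y_j, r_j, p_j) for the system Hbar y = -g.\<close>
fun cg_iter :: "(real^'n \<Rightarrow> real^'n) \<Rightarrow> real^'n \<Rightarrow> nat \<Rightarrow> (real^'n) \<times> (real^'n) \<times> (real^'n)" where
  "cg_iter Hb g 0 = (0, g, - g)"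
| "cg_iter Hb g (Suc j) =
     (case cg_iter Hb g j of (y, r, p) \<Rightarrow>
       (let \<alpha> = (norm r)\<^sup>2 / (p \<bullet> Hb p);
            y' = y + \<alpha> *\<^sub>R p;
            r' = r + \<alpha> *\<^sub>R Hb p;
            \<beta> = (norm r')\<^sup>2 / (norm r)\<^sup>2;
            p' = - r' + \<beta> *\<^sub>R p
        in (y', r', p')))"

definition updM :: "(real^'n \<Rightarrow> real^'n) \<Rightarrow> real \<Rightarrow> real^'n \<Rightarrow> real" where
  "updM H M v = (if norm (H v) > M * norm v then norm (H v) / norm v else M)"

text \<open>Value of M after iteration j (j = 0: after the check on p_0).\<close>
fun cg_M :: "(real^'n \<Rightarrow> real^'n) \<Rightarrow> (real^'n \<Rightarrow> real^'n) \<Rightarrow> real^'n \<Rightarrow> real \<Rightarrow> nat \<Rightarrow> real" where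
  "cg_M H Hb g M 0 = updM H M (- g)"
| "cg_M H Hb g M (Suc j) =
     (case cg_iter Hb g (Suc j) of (y, r, p) \<Rightarrow>
        updM H (updM H (updM H (cg_M H Hb g M j) p) y) r)"

text \<open>capped_cg H g eps zeta delta taub M d t: (d,t) is a possible output of
  Capped CG(H,g,eps,zeta,delta,taub,M).  The choice of the index i in the last
  branch is nondeterministic.\<close>
definition capped_cg ::
  "(real^'n \<Rightarrow> real^'n) \<Rightarrow> real^'n \<Rightarrow> real \<Rightarrow> real \<Rightarrow> real \<Rightarrow> real \<Rightarrow> real
     \<Rightarrow> real^'n \<Rightarrow> cg_type \<Rightarrow> bool" where
  "capped_cg H g eps zeta delta taub M d t \<longleftrightarrow>
   (let c = taub * norm g powr delta;
        Hb = (\<lambda>v. H v + c *\<^sub>R v);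
        Y = (\<lambda>j. fst (cg_iter Hb g j));
        R = (\<lambda>j. fst (snd (cg_iter Hb g j)));
        P = (\<lambda>j. snd (snd (cg_iter Hb g j)));
        Mj = cg_M H Hb g M;
        \<kappa> = (\<lambda>j. (Mj j + c) / eps);
        zh = (\<lambda>j. zeta / (3 * \<kappa> j));
        \<tau> = (\<lambda>j. sqrt (\<kappa> j) / (sqrt (\<kappa> j) + 1));
        T = (\<lambda>j. 4 * (\<kappa> j)^4 / (1 - sqrt (\<tau> j))\<^sup>2);
        negc = (\<lambda>v. v \<bullet> Hb v < eps * (norm v)\<^sup>2);
        t4 = (\<lambda>j. norm (R j) > sqrt (T j) * (\<tau> j) powr (real j / 2) * norm (R 0));
        stop = (\<lambda>j. negc (Y j) \<or> norm (R j) \<le> zh j * norm (R 0) \<or> negc (P j) \<or> t4 j)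
    in if negc (P 0) then d = P 0 \<and> t = NC
       else (\<exists>j\<ge>1. (\<forall>i\<in>{1..<j}. \<not> stop i) \<and>
              (if negc (Y j) then d = Y j \<and> t = NC
               else if norm (R j) \<le> zh j * norm (R 0) then d = Y j \<and> t = SOL
               else if negc (P j) then d = P j \<and> t = NC
               else t4 j \<and> t = NC \<and>
                    (\<exists>i<j. negc (Y (Suc j) - Y i) \<and> d = Y (Suc j) - Y i))))"

definition cond_a :: "real \<Rightarrow> real \<Rightarrow> (real^'n \<Rightarrow> real^'n) \<Rightarrow> real^'n \<Rightarrow> bool" where
  "cond_a lam eg gf x \<longleftrightarrow> Izero eg x \<noteq> {} \<and> (\<exists>i\<in>Izero eg x. geps lam eg gf x $ i \<noteq> 0)"

definition cond_b :: "real \<Rightarrow> real \<Rightarrow> (real^'n \<Rightarrow> real^'n) \<Rightarrow> real^'n \<Rightarrow> bool" where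
  "cond_b lam eg gf x \<longleftrightarrow> Inz eg x \<noteq> {} \<and> norm (restr (Inz eg x) (geps lam eg gf x)) \<noteq> 0"

definition pg_step ::
  "(real^'n \<Rightarrow> real) \<Rightarrow> real \<Rightarrow> (real^'n \<Rightarrow> real^'n) \<Rightarrow> real \<Rightarrow> real
     \<Rightarrow> real^'n \<Rightarrow> real^'n \<Rightarrow> bool" where
  "pg_step f lam gf beta etab x x' \<longleftrightarrow>
   (let tr = (\<lambda>j::nat. prox_l1 (lam / beta^j) (x - (1 / beta^j) *\<^sub>R gf x));
        ok = (\<lambda>j::nat. phi f lam (tr j) < phi f lam x - etab / beta^j * (norm (Gmap lam gf (beta^j) x))\<^sup>2)
    in \<exists>j. ok j \<and> (\<forall>i<j. \<not> ok i) \<and> x' = tr j)"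

definition ncg_step ::
  "(real^'n \<Rightarrow> real) \<Rightarrow> real \<Rightarrow> (real^'n \<Rightarrow> real^'n) \<Rightarrow> (real^'n \<Rightarrow> real^'n^'n)
     \<Rightarrow> real \<Rightarrow> real \<Rightarrow> real \<Rightarrow> real \<Rightarrow> real \<Rightarrow> real
     \<Rightarrow> real^'n \<Rightarrow> real^'n \<Rightarrow> bool" where
  "ncg_step f lam gf Hf eg delta tauh zeta eta theta x x' \<longleftrightarrow>
   (let eh = sqrt eg;
        I = Inz eg x;
        g = restr I (geps lam eg gf x);
        H = (\<lambda>v. restr I (Hf x *v v))
    in \<exists>tk M d t.
         2 * eh / norm g powr delta \<le> tk \<and> tk \<le> 2 * tauh * eh / norm g powr delta \<and>
         M \<ge> 0 \<and> capped_cg H g eh zeta delta tk M d t \<and>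
         (let dk = restr I (if t = NC
                            then (- sgn1 (d \<bullet> g) * \<bar>d \<bullet> H d\<bar> / (norm d)\<^sup>2 / norm d) *\<^sub>R d
                            else d);
              ok = (\<lambda>j::nat. phi f lam (x + theta^j *\<^sub>R dk)
                              < phi f lam x - eta * theta^(2*j) * eh * (norm dk)\<^sup>2)
          in \<exists>j. ok j \<and> (\<forall>i<j. \<not> ok i) \<and> x' = x + theta^j *\<^sub>R dk))"

text \<open>A sequence generated by FPGN2CM.  If neither step applies, the
  algorithm stops; we model this by keeping the iterate fixed.\<close>
definition fpgn2cm_seq ::
  "(real^'n \<Rightarrow> real) \<Rightarrow> real \<Rightarrow> (real^'n \<Rightarrow> real^'n) \<Rightarrow> (real^'n \<Rightarrow> real^'n^'n)
     \<Rightarrow> real \<Rightarrow> real \<Rightarrow> real \<Rightarrow> real \<Rightarrow> real \<Rightarrow> real \<Rightarrow> real \<Rightarrow> real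
     \<Rightarrow> real^'n \<Rightarrow> (nat \<Rightarrow> real^'n) \<Rightarrow> bool" where
  "fpgn2cm_seq f lam gf Hf eg beta delta tauh zeta etab eta theta x0 xs \<longleftrightarrow>
   xs 0 = x0 \<and>
   (\<forall>k. if cond_a lam eg gf (xs k) then pg_step f lam gf beta etab (xs k) (xs (Suc k))
        else if cond_b lam eg gf (xs k)
          then ncg_step f lam gf Hf eg delta tauh zeta eta theta (xs k) (xs (Suc k))
        else xs (Suc k) = xs k)"

end

theory Submission
  imports Defs
begin

text \<open>The values of \<open>\<phi>\<close> along the iterates are nonincreasing and bounded below by
  the minimum, hence converge; so eventually no step can decrease \<open>\<phi>\<close> by a fixed
  amount \<open>c > 0\<close>. But whenever the proximal gradient step is triggered, some
  coordinate \<open>i \<in> I\<^sub>0\<close> has \<open>|\<nabla>f(x)\<^sub>i| > \<lambda> + \<epsilon>\<^sub>g\<^sup>3\<^sup>/\<^sup>4\<close>, so \<open>\<parallel>\<G>\<^sub>t(x)\<parallel> > \<epsilon>\<^sub>g\<^sup>3\<^sup>/\<^sup>4\<close> for every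
  \<open>t > 0\<close>; and on the compact level set the gradient is bounded and Lipschitz, so the
  backtracking accepts some \<open>t \<le> \<beta>\<^sup>J\<close> with \<open>J\<close> independent of \<open>x\<close>. The step therefore
  decreases \<open>\<phi>\<close> by at least \<open>\<eta>\<^sub>b \<epsilon>\<^sub>g\<^sup>3\<^sup>/\<^sup>2 / \<beta>\<^sup>J\<close>.\<close>

lemma norm_sq_eq_sum_cart: "(norm (x :: real^'n))\<^sup>2 = (\<Sum>k\<in>UNIV. (x $ k)\<^sup>2)"
  by (simp only: power2_norm_eq_inner) (simp add: inner_vec_def power2_eq_square)

lemma lipschitz_gradient_upper_bound:
  fixes f :: "'a::real_inner \<Rightarrow> real"
  assumes grad: "\<And>x. (f has_derivative (\<lambda>h. gf x \<bullet> h)) (at x)"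
    and seg: "\<And>s. 0 \<le> s \<Longrightarrow> s \<le> 1 \<Longrightarrow> x + s *\<^sub>R d \<in> U"
    and lip: "\<forall>a\<in>U. \<forall>b\<in>U. norm (gf a - gf b) \<le> L * norm (a - b)" and "L \<ge> 0"
  shows "f (x + d) \<le> f x + gf x \<bullet> d + L * (norm d)\<^sup>2"
proof -
  \<comment> \<open>The mean value theorem yields the constant \<open>L\<close> instead of the sharp \<open>L/2\<close>; any constant suffices.\<close>
  define p where "p s = f (x + s *\<^sub>R d)" for s
  have "DERIV p s :> gf (x + s *\<^sub>R d) \<bullet> d" for s
  proof -
    have "((\<lambda>s. x + s *\<^sub>R d) has_derivative (\<lambda>h. h *\<^sub>R d)) (at s)"
      by (auto intro!: derivative_eq_intros)
    from has_derivative_compose[OF this grad]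
    have "(p has_derivative (\<lambda>h. gf (x + s *\<^sub>R d) \<bullet> (h *\<^sub>R d))) (at s)" unfolding p_def .
    then show ?thesis unfolding has_field_derivative_def
      by (rule has_derivative_eq_rhs) (auto simp: fun_eq_iff)
  qed
  then obtain z where z: "0 < z" "z < 1" "p 1 - p 0 = gf (x + z *\<^sub>R d) \<bullet> d"
    using MVT2[of 0 1 p "\<lambda>s. gf (x + s *\<^sub>R d) \<bullet> d"] by auto
  have "x \<in> U" "x + z *\<^sub>R d \<in> U" using seg[of 0] seg[of z] z by auto
  then have "(gf (x + z *\<^sub>R d) - gf x) \<bullet> d \<le> (L * norm (z *\<^sub>R d)) * norm d"
    using lip norm_cauchy_schwarz order_trans mult_right_mono norm_ge_zero
    by (metis add_diff_cancel_left')
  also have "\<dots> = L * (z * (norm d)\<^sup>2)"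
    using z by (simp add: power2_eq_square)
  also have "\<dots> \<le> L * (norm d)\<^sup>2"
    using z \<open>L \<ge> 0\<close> by (intro mult_left_mono mult_left_le_one_le) auto
  finally show ?thesis using z(3) by (simp add: p_def inner_diff_left)
qed

lemma decseq_eventually_drop_less:
  fixes a :: "nat \<Rightarrow> real"
  assumes "decseq a" "\<And>k. m \<le> a k" "c > 0"
  shows "\<exists>K. \<forall>k\<ge>K. a k - c < a (Suc k)"
proof -
  obtain l where lim: "a \<longlonglongrightarrow> l" and l: "\<And>k. l \<le> a k"
    using decseq_convergent[of a m] assms(1,2) by blast
  have "eventually (\<lambda>k. a k < l + c) sequentially"
    using order_tendstoD(2)[OF lim] assms(3) by simp
  then obtain K where K: "\<And>k. k \<ge> K \<Longrightarrow> a k < l + c" by (auto simp: eventually_sequentially)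
  have "a k - c < a (Suc k)" if "k \<ge> K" for k
    using K[OF that] l[of "Suc k"] by linarith
  then show ?thesis by blast
qed

definition soft_threshold :: "real \<Rightarrow> real \<Rightarrow> real" where
  "soft_threshold c z = (if z > c then z - c else if z < - c then z + c else 0)"

lemma soft_threshold_three_point:
  assumes "c \<ge> 0"
  shows "c * \<bar>soft_threshold c z\<bar> + (soft_threshold c z - z)\<^sup>2 / 2 + (v - soft_threshold c z)\<^sup>2 / 2
         \<le> c * \<bar>v\<bar> + (v - z)\<^sup>2 / 2"
proof -
  consider "z > c" | "z < - c" | "\<bar>z\<bar> \<le> c" by linarith
  then show ?thesis
  proof cases
    case 1
    have "c * v \<le> c * \<bar>v\<bar>" using assms by (simp add: mult_left_mono)
    with 1 show ?thesis unfolding soft_threshold_def by (simp add: power2_eq_square field_simps)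
  next
    case 2
    then have "c * \<bar>soft_threshold c z\<bar> + (soft_threshold c z - z)\<^sup>2 / 2 + (v - soft_threshold c z)\<^sup>2 / 2
               = - c * v + (v - z)\<^sup>2 / 2"
      using assms unfolding soft_threshold_def by (simp add: power2_eq_square field_simps)
    moreover have "- c * v \<le> c * \<bar>v\<bar>" using assms mult_left_mono[of "-v" "\<bar>v\<bar>" c] by simp
    ultimately show ?thesis by linarith
  next
    case 3
    have "v * z \<le> \<bar>v\<bar> * \<bar>z\<bar>" by (metis abs_ge_self abs_mult)
    also have "\<dots> \<le> c * \<bar>v\<bar>" using 3 mult_left_mono[of "\<bar>z\<bar>" c "\<bar>v\<bar>"] by (simp add: mult.commute)
    finally have "v * z \<le> c * \<bar>v\<bar>" .
    moreover have "soft_threshold c z = 0" using 3 by (auto simp: soft_threshold_def)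
    moreover have "(v - z)\<^sup>2 / 2 = v\<^sup>2 / 2 - v * z + z\<^sup>2 / 2" by (simp add: power2_diff)
    ultimately show ?thesis by (simp add: add_divide_distrib diff_divide_distrib)
  qed
qed

lemma soft_threshold_scale: "t > 0 \<Longrightarrow> t * soft_threshold (lam / t) z = soft_threshold lam (t * z)"
  unfolding soft_threshold_def by (auto simp: field_simps)

lemma abs_soft_threshold_diff_le: "c \<ge> 0 \<Longrightarrow> \<bar>soft_threshold c z - z\<bar> \<le> c"
  unfolding soft_threshold_def by auto

lemma abs_diff_soft_threshold_ge:
  assumes "lam \<ge> 0"
  shows "\<bar>g\<bar> - lam \<le> \<bar>w - soft_threshold lam (w - g)\<bar>"
proof -
  consider "w - g > lam" | "w - g < - lam" | "\<bar>w - g\<bar> \<le> lam" by linarith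
  then show ?thesis
    by cases (use assms in \<open>auto simp: soft_threshold_def\<close>)
qed

lemma soft_threshold_step_decrease:
  fixes x g :: real
  assumes "t > 0" "lam \<ge> 0"
  defines "u \<equiv> soft_threshold (lam / t) (x - g / t)"
  shows "g * (u - x) + lam * \<bar>u\<bar> - lam * \<bar>x\<bar> \<le> - t * (u - x)\<^sup>2"
proof -
  have "(lam / t) * \<bar>u\<bar> + (u - (x - g / t))\<^sup>2 / 2 + (x - u)\<^sup>2 / 2 \<le> (lam / t) * \<bar>x\<bar> + (g / t)\<^sup>2 / 2"
    using soft_threshold_three_point[of "lam / t" "x - g / t" x] assms by simp
  moreover have "(u - (x - g / t))\<^sup>2 = (u - x)\<^sup>2 + 2 * (g / t * (u - x)) + (g / t)\<^sup>2"
    using \<open>t > 0\<close> by (simp add: power2_eq_square field_simps)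
  moreover have "(x - u)\<^sup>2 = (u - x)\<^sup>2" by (simp add: power2_commute)
  ultimately have "(lam / t) * \<bar>u\<bar> + (u - x)\<^sup>2 + g / t * (u - x) \<le> (lam / t) * \<bar>x\<bar>"
    by linarith
  then have "t * ((lam / t) * \<bar>u\<bar> + (u - x)\<^sup>2 + g / t * (u - x)) \<le> t * ((lam / t) * \<bar>x\<bar>)"
    using \<open>t > 0\<close> by (intro mult_left_mono) auto
  moreover have "t * ((lam / t) * \<bar>u\<bar> + (u - x)\<^sup>2 + g / t * (u - x))
                 = lam * \<bar>u\<bar> + t * (u - x)\<^sup>2 + g * (u - x)"
    using \<open>t > 0\<close> by (simp add: field_simps)
  ultimately show ?thesis using \<open>t > 0\<close> by (simp add: algebra_simps)
qed

lemma prox_l1_eq_soft_threshold: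
  assumes "c > 0"
  shows "prox_l1 c z = (\<chi> k. soft_threshold c (z $ k))"
proof -
  define s where "s = (\<chi> k. soft_threshold c (z $ k))"
  have three_point: "c * l1norm s + (norm (s - z))\<^sup>2 / 2 + (norm (v - s))\<^sup>2 / 2
                     \<le> c * l1norm v + (norm (v - z))\<^sup>2 / 2" for v
  proof -
    have "c * l1norm s + (norm (s - z))\<^sup>2 / 2 + (norm (v - s))\<^sup>2 / 2
        = (\<Sum>k\<in>UNIV. c * \<bar>s $ k\<bar> + (s $ k - z $ k)\<^sup>2 / 2 + (v $ k - s $ k)\<^sup>2 / 2)"
      by (simp add: l1norm_def norm_sq_eq_sum_cart sum.distrib sum_distrib_left sum_divide_distrib)
    also have "\<dots> \<le> (\<Sum>k\<in>UNIV. c * \<bar>v $ k\<bar> + (v $ k - z $ k)\<^sup>2 / 2)"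
      unfolding s_def using soft_threshold_three_point assms by (intro sum_mono) auto
    also have "\<dots> = c * l1norm v + (norm (v - z))\<^sup>2 / 2"
      by (simp add: l1norm_def norm_sq_eq_sum_cart sum.distrib sum_distrib_left sum_divide_distrib)
    finally show ?thesis .
  qed
  show ?thesis unfolding prox_l1_def s_def[symmetric]
  proof (rule the_equality)
    show "\<forall>v. c * l1norm s + (norm (s - z))\<^sup>2 / 2 \<le> c * l1norm v + (norm (v - z))\<^sup>2 / 2"
    proof
      fix v
      show "c * l1norm s + (norm (s - z))\<^sup>2 / 2 \<le> c * l1norm v + (norm (v - z))\<^sup>2 / 2"
        using three_point[of v] zero_le_power2[of "norm (v - s)"] by linarith
    qed
  next
    fix u
    assume "\<forall>v. c * l1norm u + (norm (u - z))\<^sup>2 / 2 \<le> c * l1norm v + (norm (v - z))\<^sup>2 / 2"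
    then have "c * l1norm u + (norm (u - z))\<^sup>2 / 2 \<le> c * l1norm s + (norm (s - z))\<^sup>2 / 2" by blast
    with three_point[of u] have "(norm (u - s))\<^sup>2 \<le> 0" by linarith
    then show "u = s" by simp
  qed
qed

lemma Gmap_nth:
  assumes "t > 0" "lam > 0"
  shows "Gmap lam gf t x $ k = t * x $ k - soft_threshold lam (t * x $ k - gf x $ k)"
proof -
  have "Gmap lam gf t x $ k = t * x $ k - t * soft_threshold (lam / t) (x $ k - gf x $ k / t)"
    using assms by (simp add: Gmap_def prox_l1_eq_soft_threshold algebra_simps)
  also have "t * soft_threshold (lam / t) (x $ k - gf x $ k / t) = soft_threshold lam (t * x $ k - gf x $ k)"
    using assms by (simp add: soft_threshold_scale right_diff_distrib)
  finally show ?thesis .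
qed

lemma abs_grad_gt_if_geps_nonzero:
  assumes "i \<in> Izero eg x" "geps lam eg gf x $ i \<noteq> 0"
  shows "lam + eg powr (3/4) < \<bar>gf x $ i\<bar>"
  using assms unfolding Izero_def geps_def by (auto simp: abs_le_iff min_def max_def split: if_splits)

lemma norm_Gmap_gt_if_cond_a:
  assumes "cond_a lam eg gf x" "t > 0" "lam > 0"
  shows "eg powr (3/4) < norm (Gmap lam gf t x)"
proof -
  from assms(1) obtain i where "i \<in> Izero eg x" "geps lam eg gf x $ i \<noteq> 0"
    unfolding cond_a_def by blast
  then have "lam + eg powr (3/4) < \<bar>gf x $ i\<bar>" by (rule abs_grad_gt_if_geps_nonzero)
  then have "eg powr (3/4) < \<bar>Gmap lam gf t x $ i\<bar>"
    using abs_diff_soft_threshold_ge[of lam "gf x $ i" "t * x $ i"] assms(2,3)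
    by (simp add: Gmap_nth)
  also have "\<dots> \<le> norm (Gmap lam gf t x)" by (rule component_le_norm_cart)
  finally show ?thesis .
qed

lemma Gmap_eq_scaleR_prox_step:
  "Gmap lam gf t x = (- t) *\<^sub>R (prox_l1 (lam / t) (x - (1 / t) *\<^sub>R gf x) - x)"
  unfolding Gmap_def by (simp add: algebra_simps)

lemma norm_prox_l1_step_le:
  fixes x g :: "real^'n"
  assumes "t > 0" "lam > 0"
  shows "norm (prox_l1 (lam / t) (x - (1 / t) *\<^sub>R g) - x) \<le> real CARD('n) * (norm g + lam) / t"
proof -
  define d where "d = prox_l1 (lam / t) (x - (1 / t) *\<^sub>R g) - x"
  have "\<bar>d $ k\<bar> \<le> (norm g + lam) / t" for k
  proof -
    have "d $ k = soft_threshold (lam / t) (x $ k - g $ k / t) - x $ k"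
      using assms by (simp add: d_def prox_l1_eq_soft_threshold)
    then have "\<bar>d $ k\<bar> \<le> \<bar>soft_threshold (lam / t) (x $ k - g $ k / t) - (x $ k - g $ k / t)\<bar> + \<bar>g $ k / t\<bar>"
      by linarith
    then have "\<bar>d $ k\<bar> \<le> lam / t + \<bar>g $ k\<bar> / t"
      using abs_soft_threshold_diff_le[of "lam / t" "x $ k - g $ k / t"] assms by simp
    also have "\<dots> \<le> (norm g + lam) / t"
      using component_le_norm_cart[of g k] assms by (simp add: add_divide_distrib[symmetric] divide_right_mono)
    finally show ?thesis .
  qed
  then have "(\<Sum>k\<in>UNIV. \<bar>d $ k\<bar>) \<le> (\<Sum>k\<in>(UNIV::'n set). (norm g + lam) / t)"
    by (intro sum_mono)
  with norm_le_l1_cart[of d] have "norm d \<le> (\<Sum>k\<in>(UNIV::'n set). (norm g + lam) / t)"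
    by linarith
  then show ?thesis by (simp add: d_def)
qed

lemma prox_l1_step_decrease:
  fixes x g :: "real^'n"
  assumes "t > 0" "lam > 0"
  defines "d \<equiv> prox_l1 (lam / t) (x - (1 / t) *\<^sub>R g) - x"
  shows "g \<bullet> d + lam * l1norm (x + d) - lam * l1norm x \<le> - t * (norm d)\<^sup>2"
proof -
  have d: "d $ k = soft_threshold (lam / t) (x $ k - g $ k / t) - x $ k" for k
    using assms by (simp add: d_def prox_l1_eq_soft_threshold)
  have "g \<bullet> d + lam * l1norm (x + d) - lam * l1norm x
      = (\<Sum>k\<in>UNIV. g $ k * d $ k + lam * \<bar>x $ k + d $ k\<bar> - lam * \<bar>x $ k\<bar>)"
    by (simp add: inner_vec_def l1norm_def sum.distrib sum_subtractf sum_distrib_left)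
  also have "\<dots> \<le> (\<Sum>k\<in>UNIV. - t * (d $ k)\<^sup>2)"
    unfolding d using soft_threshold_step_decrease assms by (intro sum_mono) auto
  also have "\<dots> = - t * (norm d)\<^sup>2"
    by (simp add: norm_sq_eq_sum_cart sum_distrib_left)
  finally show ?thesis .
qed

lemma prox_trial_step_accepted:
  fixes x :: "real^'n"
  assumes lam: "lam > 0"
    and grad: "\<And>x. (f has_derivative (\<lambda>h. gf x \<bullet> h)) (at x)"
    and lip: "\<forall>a\<in>U. \<forall>b\<in>U. norm (gf a - gf b) \<le> L * norm (a - b)" and L: "L \<ge> 0"
    and ball: "cball x r \<subseteq> U" and t: "t > 0"
    and step: "real CARD('n) * (norm (gf x) + lam) / t \<le> r"
    and curv: "L < (1 - etab) * t"
    and G: "Gmap lam gf t x \<noteq> 0"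
  shows "phi f lam (prox_l1 (lam / t) (x - (1 / t) *\<^sub>R gf x))
         < phi f lam x - etab / t * (norm (Gmap lam gf t x))\<^sup>2"
proof -
  define d where "d = prox_l1 (lam / t) (x - (1 / t) *\<^sub>R gf x) - x"
  have G_eq: "Gmap lam gf t x = (- t) *\<^sub>R d"
    unfolding d_def by (rule Gmap_eq_scaleR_prox_step)
  have "norm d \<le> r"
    using norm_prox_l1_step_le[OF t lam, of x "gf x"] step by (simp add: d_def)
  then have "x + s *\<^sub>R d \<in> U" if "0 \<le> s" "s \<le> 1" for s
    using that ball mult_right_mono[of s 1 "norm d"] by (auto simp: dist_norm)
  then have "f (x + d) \<le> f x + gf x \<bullet> d + L * (norm d)\<^sup>2"
    by (rule lipschitz_gradient_upper_bound[OF grad _ lip L])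
  moreover have "gf x \<bullet> d + lam * l1norm (x + d) - lam * l1norm x \<le> - t * (norm d)\<^sup>2"
    unfolding d_def by (rule prox_l1_step_decrease[OF t lam])
  ultimately have "phi f lam (x + d) \<le> phi f lam x - (t - L) * (norm d)\<^sup>2"
    unfolding phi_def by (simp add: left_diff_distrib)
  moreover have "etab / t * (norm (Gmap lam gf t x))\<^sup>2 = etab * t * (norm d)\<^sup>2"
    unfolding G_eq using t by (simp add: power2_eq_square)
  moreover have "etab * t * (norm d)\<^sup>2 < (t - L) * (norm d)\<^sup>2"
    using curv G G_eq by (intro mult_strict_right_mono) (auto simp: algebra_simps)
  ultimately show ?thesis by (simp add: d_def)
qed

lemma pg_step_decrease:
  assumes pg: "pg_step f lam gf beta etab x x'" and beta: "beta > 1" and etab: "etab > 0"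
    and accept: "phi f lam (prox_l1 (lam / beta^J) (x - (1 / beta^J) *\<^sub>R gf x))
                 < phi f lam x - etab / beta^J * (norm (Gmap lam gf (beta^J) x))\<^sup>2"
    and e: "e \<ge> 0" "\<And>t. t > 0 \<Longrightarrow> e \<le> norm (Gmap lam gf t x)"
  shows "phi f lam x' \<le> phi f lam x - etab * e\<^sup>2 / beta^J"
proof -
  from pg obtain j where j: "phi f lam x' < phi f lam x - etab / beta^j * (norm (Gmap lam gf (beta^j) x))\<^sup>2"
    and first: "\<forall>i<j. \<not> phi f lam (prox_l1 (lam / beta^i) (x - (1 / beta^i) *\<^sub>R gf x))
                       < phi f lam x - etab / beta^i * (norm (Gmap lam gf (beta^i) x))\<^sup>2"
    unfolding pg_step_def Let_def by blast
  have "j \<le> J" using first accept by (meson not_le)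
  then have "beta^j \<le> beta^J" using beta by (intro power_increasing) auto
  moreover have "beta^j > 0" using beta by simp
  ultimately have "etab * e\<^sup>2 / beta^J \<le> etab * e\<^sup>2 / beta^j"
    using etab by (intro divide_left_mono) auto
  also have "\<dots> \<le> etab * (norm (Gmap lam gf (beta^j) x))\<^sup>2 / beta^j"
    using e \<open>beta^j > 0\<close> etab by (intro divide_right_mono mult_left_mono power_mono) auto
  finally show ?thesis using j by simp
qed

lemma pg_step_decrease_if_cond_a:
  fixes x :: "real^'n"
  assumes lam: "lam > 0"
    and grad: "\<And>x. (f has_derivative (\<lambda>h. gf x \<bullet> h)) (at x)"
    and lip: "\<forall>a\<in>U. \<forall>b\<in>U. norm (gf a - gf b) \<le> L * norm (a - b)" and L: "L \<ge> 0"
    and ball: "cball x r \<subseteq> U" and beta: "beta > 1" and etab: "etab > 0"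
    and step: "real CARD('n) * (norm (gf x) + lam) / beta^J \<le> r"
    and curv: "L < (1 - etab) * beta^J"
    and ca: "cond_a lam eg gf x" and pg: "pg_step f lam gf beta etab x x'"
  shows "phi f lam x' \<le> phi f lam x - etab * (eg powr (3/4))\<^sup>2 / beta^J"
proof -
  have t: "beta^J > 0" using beta by simp
  have G: "eg powr (3/4) < norm (Gmap lam gf t x)" if "t > 0" for t
    using norm_Gmap_gt_if_cond_a[OF ca that lam] .
  then have "Gmap lam gf (beta^J) x \<noteq> 0"
    using t by fastforce
  then have "phi f lam (prox_l1 (lam / beta^J) (x - (1 / beta^J) *\<^sub>R gf x))
             < phi f lam x - etab / beta^J * (norm (Gmap lam gf (beta^J) x))\<^sup>2"
    by (rule prox_trial_step_accepted[OF lam grad lip L ball t step curv])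
  from pg_step_decrease[OF pg beta etab this] G show ?thesis
    by (simp add: less_imp_le)
qed

lemma pg_step_uniform_decrease:
  fixes S :: "(real^'n) set"
  assumes lam: "lam > 0"
    and grad: "\<And>x. (f has_derivative (\<lambda>h. gf x \<bullet> h)) (at x)"
    and gf_cont: "continuous_on S gf" and S: "compact S" "open U" "S \<subseteq> U"
    and lip: "\<forall>a\<in>U. \<forall>b\<in>U. norm (gf a - gf b) \<le> L * norm (a - b)"
    and beta: "beta > 1" and etab: "0 < etab" "etab < 1" and eg: "eg > 0"
  obtains c where "c > 0"
    "\<And>x x'. x \<in> S \<Longrightarrow> cond_a lam eg gf x \<Longrightarrow> pg_step f lam gf beta etab x x'
             \<Longrightarrow> phi f lam x' \<le> phi f lam x - c"
proof -
  define L' where "L' = max L 0"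
  have lip': "\<forall>a\<in>U. \<forall>b\<in>U. norm (gf a - gf b) \<le> L' * norm (a - b)"
  proof (intro ballI)
    fix a b assume "a \<in> U" "b \<in> U"
    then have "norm (gf a - gf b) \<le> L * norm (a - b)" using lip by blast
    also have "\<dots> \<le> L' * norm (a - b)" unfolding L'_def by (intro mult_right_mono) auto
    finally show "norm (gf a - gf b) \<le> L' * norm (a - b)" .
  qed
  obtain r where "r > 0" "(\<Union>x\<in>S. cball x r) \<subseteq> U"
    using compact_subset_open_imp_cball_epsilon_subset[OF S] by blast
  then have r: "r > 0" "\<And>x. x \<in> S \<Longrightarrow> cball x r \<subseteq> U" by auto
  obtain B where B: "\<And>x. x \<in> S \<Longrightarrow> norm (gf x) \<le> B"
    using compact_imp_bounded[OF compact_continuous_image[OF gf_cont S(1)]]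
    unfolding bounded_iff by auto
  obtain J where J: "max (real CARD('n) * (B + lam) / r) (L' / (1 - etab)) < beta^J"
    using real_arch_pow[OF beta] by blast
  have t: "beta^J > 0" using beta by simp
  have step: "real CARD('n) * (norm (gf x) + lam) / beta^J \<le> r" if "x \<in> S" for x
  proof -
    have "real CARD('n) * (norm (gf x) + lam) \<le> real CARD('n) * (B + lam)"
      using B[OF that] by (intro mult_left_mono) auto
    also have "\<dots> < beta^J * r"
      using J r(1) by (simp add: pos_divide_less_eq)
    finally show ?thesis using t by (simp add: pos_divide_le_eq mult.commute)
  qed
  have curv: "L' < (1 - etab) * beta^J"
    using J etab by (simp add: divide_less_eq mult.commute)
  show ?thesis
  proof
    show "etab * (eg powr (3/4))\<^sup>2 / beta^J > 0" using etab eg beta by simp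
  qed (rule pg_step_decrease_if_cond_a[OF lam grad lip' _ r(2) beta etab(1) step curv],
       auto simp: L'_def)
qed

lemma pg_step_phi_le:
  assumes "pg_step f lam gf beta etab x x'" "etab > 0" "beta > 0"
  shows "phi f lam x' \<le> phi f lam x"
proof -
  from assms(1) obtain j
    where "phi f lam x' < phi f lam x - etab / beta^j * (norm (Gmap lam gf (beta^j) x))\<^sup>2"
    unfolding pg_step_def Let_def by blast
  moreover have "0 \<le> etab / beta^j * (norm (Gmap lam gf (beta^j) x))\<^sup>2" using assms by simp
  ultimately show ?thesis by linarith
qed

lemma ncg_step_phi_le:
  assumes "ncg_step f lam gf Hf eg delta tauh zeta eta theta x x'" "eta > 0" "theta > 0" "eg > 0"
  shows "phi f lam x' \<le> phi f lam x"
proof -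
  from assms(1) obtain j dk
    where "phi f lam (x + theta^j *\<^sub>R dk) < phi f lam x - eta * theta^(2*j) * sqrt eg * (norm dk)\<^sup>2"
      and "x' = x + theta^j *\<^sub>R dk"
    unfolding ncg_step_def Let_def by blast
  moreover have "0 \<le> eta * theta^(2*j) * sqrt eg * (norm dk)\<^sup>2" using assms by simp
  ultimately show ?thesis by simp
qed

lemma fpgn2cm_seq_decseq_phi:
  assumes "fpgn2cm_seq f lam gf Hf eg beta delta tauh zeta etab eta theta x0 xs"
    and "beta > 0" "etab > 0" "eta > 0" "theta > 0" "eg > 0"
  shows "decseq (\<lambda>k. phi f lam (xs k))"
proof (rule decseq_SucI)
  fix k
  have "if cond_a lam eg gf (xs k) then pg_step f lam gf beta etab (xs k) (xs (Suc k))
        else if cond_b lam eg gf (xs k)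
          then ncg_step f lam gf Hf eg delta tauh zeta eta theta (xs k) (xs (Suc k))
        else xs (Suc k) = xs k"
    using assms(1) unfolding fpgn2cm_seq_def by blast
  then show "phi f lam (xs (Suc k)) \<le> phi f lam (xs k)"
    using pg_step_phi_le[OF _ assms(3,2)] ncg_step_phi_le[OF _ assms(4-6)]
    by (auto split: if_splits)
qed

lemma fpgn2cm_seq_pg_step:
  assumes "fpgn2cm_seq f lam gf Hf eg beta delta tauh zeta etab eta theta x0 xs"
    and "cond_a lam eg gf (xs k)"
  shows "pg_step f lam gf beta etab (xs k) (xs (Suc k))"
proof -
  have "if cond_a lam eg gf (xs k) then pg_step f lam gf beta etab (xs k) (xs (Suc k))
        else if cond_b lam eg gf (xs k)
          then ncg_step f lam gf Hf eg delta tauh zeta eta theta (xs k) (xs (Suc k))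
        else xs (Suc k) = xs k"
    using assms(1) unfolding fpgn2cm_seq_def by blast
  with assms(2) show ?thesis by simp
qed

lemma compact_phi_sublevel:
  assumes "continuous_on UNIV f" "bounded {x. phi f lam x \<le> a}"
  shows "compact {x. phi f lam x \<le> a}"
proof -
  have "continuous_on UNIV (phi f lam)"
    unfolding phi_def[abs_def] l1norm_def by (intro continuous_intros assms(1))
  then have "closed {x. phi f lam x \<le> a}"
    by (intro closed_Collect_le) (auto intro: continuous_intros)
  with assms(2) show ?thesis by (simp add: compact_eq_bounded_closed)
qed

theorem lemma12:
  fixes f :: "real^'n \<Rightarrow> real"
    and gf :: "real^'n \<Rightarrow> real^'n"
    and Hf :: "real^'n \<Rightarrow> real^'n^'n"
    and lam eg beta delta tauh zeta etab eta theta :: real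
    and x0 :: "real^'n"
    and xs :: "nat \<Rightarrow> real^'n"
  assumes lam: "lam > 0"
    and grad: "\<And>x. (f has_derivative (\<lambda>h. gf x \<bullet> h)) (at x)"
    and hess: "\<And>x. (gf has_derivative (\<lambda>h. Hf x *v h)) (at x)"
    and hess_cont: "continuous_on UNIV Hf"
    and level_bdd: "bounded {x. phi f lam x \<le> phi f lam x0}"
    and lip: "\<exists>U L. open U \<and> {x. phi f lam x \<le> phi f lam x0} \<subseteq> U \<and>
               (\<forall>x\<in>U. \<forall>y\<in>U. norm (gf x - gf y) \<le> L * norm (x - y) \<and>
                               norm (Hf x - Hf y) \<le> L * norm (x - y))"
    and minimizer: "\<exists>xm. \<forall>x. phi f lam xm \<le> phi f lam x"
    and eg: "0 < eg" "eg < 1"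
    and beta: "beta > 1"
    and delta: "0 \<le> delta" "delta \<le> 1"
    and tauh: "tauh \<ge> 1"
    and zeta: "0 < zeta" "zeta < 1"
    and etab: "0 < etab" "etab < 1"
    and eta: "0 < eta" "eta < (1 - zeta) / 2"
    and theta: "0 < theta" "theta < 1"
    and gen: "fpgn2cm_seq f lam gf Hf eg beta delta tauh zeta etab eta theta x0 xs"
  shows "\<exists>K. \<forall>k\<ge>K. \<not> cond_a lam eg gf (xs k)"
proof -
  define S where "S = {x. phi f lam x \<le> phi f lam x0}"
  have "continuous_on UNIV f"
    using grad has_derivative_continuous continuous_at_imp_continuous_on by blast
  then have S_compact: "compact S" unfolding S_def using level_bdd by (rule compact_phi_sublevel)
  have "continuous_on UNIV gf"
    using hess has_derivative_continuous continuous_at_imp_continuous_on by blast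
  then have gf_cont: "continuous_on S gf" by (rule continuous_on_subset) simp
  obtain U L where U: "open U" "S \<subseteq> U" and lip_U: "\<forall>a\<in>U. \<forall>b\<in>U. norm (gf a - gf b) \<le> L * norm (a - b)"
    using lip unfolding S_def by blast
  obtain c where c: "c > 0"
    and decrease: "\<And>x x'. x \<in> S \<Longrightarrow> cond_a lam eg gf x \<Longrightarrow> pg_step f lam gf beta etab x x'
                         \<Longrightarrow> phi f lam x' \<le> phi f lam x - c"
    using pg_step_uniform_decrease[OF lam grad gf_cont S_compact U lip_U beta etab eg(1)] by blast
  have dec: "decseq (\<lambda>k. phi f lam (xs k))"
    using fpgn2cm_seq_decseq_phi[OF gen] beta etab(1) eta(1) theta(1) eg(1) by simp
  obtain K where K: "\<And>k. k \<ge> K \<Longrightarrow> phi f lam (xs k) - c < phi f lam (xs (Suc k))"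
    using minimizer decseq_eventually_drop_less[OF dec _ c] by blast
  have "xs k \<in> S" for k
    using decseqD[OF dec, of 0 k] gen by (simp add: S_def fpgn2cm_seq_def)
  have "\<not> cond_a lam eg gf (xs k)" if "k \<ge> K" for k
  proof
    assume ca: "cond_a lam eg gf (xs k)"
    from decrease[OF \<open>xs k \<in> S\<close> ca fpgn2cm_seq_pg_step[OF gen ca]] K[OF that] show False
      by linarith
  qed
  then show ?thesis by blast
qed

end
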